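(* Let $G=(V,E)$ be a bispanning graph, $(S,T)$ a pair of disjoint spanning trees of $G$ with $S\cup T=E$, $m=|E|/2$, and let $\langle(e_1,f_1),\dots,(e_m,f_m)\rangle$ be a unique exchange cyclic base ordering of $G$ and $(S,T)$. Then $\langle(f_m,e_m),\dots,(f_1,e_1)\rangle$ is also a unique exchange cyclic base ordering of $G$ and the same pair $(S,T)$.
   Context: Graphs are finite, undirected, possibly with parallel edges, no loops. A spanning tree is $T\subseteq E$ with $(V,T)$ connected and acyclic; $G$ is bispanning if $E$ is the disjoint union of two spanning trees. For a spanning tree $T$ and $e\notin T$, $C_G(T,e)$ is the edge set of the unique cycle in $T\cup\{e\}$; for $e\in T$, $D_G(T,e)$ is the set of edges of $G$ with one end in each component of $(V,T\setminus\{e\})$. For disjoint spanning trees $A,B$ with $A\cup B=E$: $(e,f)$ with $e\in A,f\in B$ is a unique $S$ edge exchange for $(A,B)$ if $D_G(A,e)\cap C_G(B,e)=\{e,f\}$; $(e,f)$ with $e\in B,f\in A$ is a unique $T$ edge exchange for $(A,B)$ if $D_G(B,e)\cap C_G(A,e)=\{e,f\}$. A unique exchange cyclic base ordering (UECBO) of $G$ and $(S,T)$, $m=|S|=|T|$, is a sequence $\langle(e_1,f_1),\dots,(e_m,f_m)\rangle$ together with orderings $S=\{s_1,\dots,s_m\}$, $T=\{t_1,\dots,t_m\}$ such that for each $i$, $(e_i,f_i)\in\{(s_i,t_i),(t_i,s_i)\}$ is a unique $S$ or $T$ edge exchange for $(\{s_i,\dots,s_m,t_1,\dots,t_{i-1}\},\{t_i,\dots,t_m,s_1,\dots,s_{i-1}\})$.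 *)

theory Defs
  imports Main
begin

text \<open>A finite multigraph (parallel edges allowed, no loops) is given by a vertex set V,
an edge set E and an endpoint map ends: every edge has exactly two distinct ends in V.\<close>

definition multigraph :: "'v set \<Rightarrow> 'e set \<Rightarrow> ('e \<Rightarrow> 'v set) \<Rightarrow> bool" where
  "multigraph V E ends \<longleftrightarrow> finite V \<and> finite E \<and>
     (\<forall>e\<in>E. ends e \<subseteq> V \<and> card (ends e) = 2)"

definition adj :: "('e \<Rightarrow> 'v set) \<Rightarrow> 'e set \<Rightarrow> ('v \<times> 'v) set" where
  "adj ends F = {(u, v). \<exists>e\<in>F. ends e = {u, v}}"

definition connected_on :: "'v set \<Rightarrow> ('e \<Rightarrow> 'v set) \<Rightarrow> 'e set \<Rightarrow> bool" where
  "connected_on V ends F \<longleftrightarrow> (\<forall>u\<in>V. \<forall>v\<in>V. (u, v) \<in> (adj ends F)\<^sup>*)"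

text \<open>The edge set C forms a cycle: a nonempty finite connected edge set in which every
vertex it touches has degree exactly 2 (with parallel edges, two parallel edges form a cycle).\<close>
definition is_cycle :: "('e \<Rightarrow> 'v set) \<Rightarrow> 'e set \<Rightarrow> bool" where
  "is_cycle ends C \<longleftrightarrow> finite C \<and> C \<noteq> {} \<and>
     connected_on (\<Union>(ends ` C)) ends C \<and>
     (\<forall>v\<in>\<Union>(ends ` C). card {f\<in>C. v \<in> ends f} = 2)"

definition acyclic_on :: "('e \<Rightarrow> 'v set) \<Rightarrow> 'e set \<Rightarrow> bool" where
  "acyclic_on ends F \<longleftrightarrow> \<not> (\<exists>C\<subseteq>F. is_cycle ends C)"

definition spanning_tree :: "'v set \<Rightarrow> 'e set \<Rightarrow> ('e \<Rightarrow> 'v set) \<Rightarrow> 'e set \<Rightarrow> bool" where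
  "spanning_tree V E ends T \<longleftrightarrow> T \<subseteq> E \<and> connected_on V ends T \<and> acyclic_on ends T"

definition bispanning :: "'v set \<Rightarrow> 'e set \<Rightarrow> ('e \<Rightarrow> 'v set) \<Rightarrow> bool" where
  "bispanning V E ends \<longleftrightarrow> (\<exists>A B. spanning_tree V E ends A \<and> spanning_tree V E ends B \<and>
      A \<inter> B = {} \<and> A \<union> B = E)"

text \<open>C_G(T,e) for e not in T: edge set of the unique cycle in T plus e.\<close>
definition fcycle :: "('e \<Rightarrow> 'v set) \<Rightarrow> 'e set \<Rightarrow> 'e \<Rightarrow> 'e set" where
  "fcycle ends T e = (THE C. C \<subseteq> insert e T \<and> is_cycle ends C)"

text \<open>D_G(T,e) for e in T: edges of G with one end in each component of (V, T - {e}),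
the two components being those of the two ends a, b of e.\<close>
definition fcut :: "'e set \<Rightarrow> ('e \<Rightarrow> 'v set) \<Rightarrow> 'e set \<Rightarrow> 'e \<Rightarrow> 'e set" where
  "fcut E ends T e = {f\<in>E. \<exists>a b x y. ends e = {a, b} \<and> ends f = {x, y} \<and>
       (a, x) \<in> (adj ends (T - {e}))\<^sup>* \<and> (b, y) \<in> (adj ends (T - {e}))\<^sup>*}"

definition unique_S_exchange :: "'e set \<Rightarrow> ('e \<Rightarrow> 'v set) \<Rightarrow> 'e set \<Rightarrow> 'e set \<Rightarrow> 'e \<Rightarrow> 'e \<Rightarrow> bool" where
  "unique_S_exchange E ends A B e f \<longleftrightarrow> e \<in> A \<and> f \<in> B \<and>
     fcut E ends A e \<inter> fcycle ends B e = {e, f}"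

definition unique_T_exchange :: "'e set \<Rightarrow> ('e \<Rightarrow> 'v set) \<Rightarrow> 'e set \<Rightarrow> 'e set \<Rightarrow> 'e \<Rightarrow> 'e \<Rightarrow> bool" where
  "unique_T_exchange E ends A B e f \<longleftrightarrow> e \<in> B \<and> f \<in> A \<and>
     fcut E ends B e \<inter> fcycle ends A e = {e, f}"

text \<open>Unique exchange cyclic base ordering of G and (S,T); the sequence
<(e_1,f_1),...,(e_m,f_m)> is the list ps, (e_i,f_i) = ps ! (i - 1).\<close>
definition UECBO :: "'v set \<Rightarrow> 'e set \<Rightarrow> ('e \<Rightarrow> 'v set) \<Rightarrow> 'e set \<Rightarrow> 'e set \<Rightarrow> ('e \<times> 'e) list \<Rightarrow> bool" where
  "UECBO V E ends S T ps \<longleftrightarrow>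
     (let m = length ps in card S = m \<and> card T = m \<and>
      (\<exists>s t. bij_betw s {1..m} S \<and> bij_betw t {1..m} T \<and>
        (\<forall>i\<in>{1..m}.
           (ps ! (i - 1) = (s i, t i) \<or> ps ! (i - 1) = (t i, s i)) \<and>
           (let A = s ` {i..m} \<union> t ` {1..<i}; B = t ` {i..m} \<union> s ` {1..<i};
                (e, f) = ps ! (i - 1) in
              unique_S_exchange E ends A B e f \<or> unique_T_exchange E ends A B e f))))"

end

theory Submission
  imports Defs
begin

text \<open>Only the disjointness of S and T matters. If (e, f) is a unique S edge exchange for
(A, B), then (f, e) is a unique T edge exchange for (B - f + e, A - e + f): the fundamental
cycle of e in B and that of f in B - f + e both live in B + e, and the fundamental cuts of e
in A and of f in A - e + f are both determined by the components of A - e. Reading the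
ordering backwards and swapping each pair, the i-th pair of bases of the new ordering is
exactly the pair obtained from the (m + 1 - i)-th pair of the old one by performing its
exchange, with the roles of the two trees interchanged.\<close>

lemma sym_adj: "sym (adj ends F)"
  unfolding adj_def sym_def by (auto simp: insert_commute)

definition ends_related :: "('v \<times> 'v) set \<Rightarrow> ('e \<Rightarrow> 'v set) \<Rightarrow> 'e \<Rightarrow> 'e \<Rightarrow> bool" where
  "ends_related R ends e g \<longleftrightarrow>
     (\<exists>a b x y. ends e = {a, b} \<and> ends g = {x, y} \<and> (a, x) \<in> R \<and> (b, y) \<in> R)"

lemma ends_related_sym:
  assumes "sym R" and "ends_related R ends e g"
  shows "ends_related R ends g e"
  using assms unfolding ends_related_def sym_def by blast

lemma ends_related_trans:
  assumes "trans R" and "ends_related R ends e f" and "ends_related R ends f g"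
  shows "ends_related R ends e g"
proof -
  obtain a b x y where e: "ends e = {a, b}" and f: "ends f = {x, y}"
    and ax: "(a, x) \<in> R" and b_y: "(b, y) \<in> R"
    using assms(2) unfolding ends_related_def by blast
  obtain x' y' p q where f': "ends f = {x', y'}" and g: "ends g = {p, q}"
    and xp: "(x', p) \<in> R" and yq: "(y', q) \<in> R"
    using assms(3) unfolding ends_related_def by blast
  have "x' = x \<and> y' = y \<or> x' = y \<and> y' = x"
    using f f' by (simp add: doubleton_eq_iff)
  then show ?thesis
  proof
    assume "x' = x \<and> y' = y"
    then have "(a, p) \<in> R" "(b, q) \<in> R"
      using ax b_y xp yq transD[OF assms(1)] by blast+
    then show ?thesis
      using e g unfolding ends_related_def by blast
  next
    assume "x' = y \<and> y' = x"
    then have "(a, q) \<in> R" "(b, p) \<in> R"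
      using ax b_y xp yq transD[OF assms(1)] by blast+
    moreover have "ends g = {q, p}"
      using g by (simp add: insert_commute)
    ultimately show ?thesis
      using e unfolding ends_related_def by blast
  qed
qed

lemma fcut_eq_ends_related:
  "fcut E ends T e = {g \<in> E. ends_related ((adj ends (T - {e}))\<^sup>*) ends e g}"
  unfolding fcut_def ends_related_def by simp

lemma fcut_exchange:
  assumes "f \<in> fcut E ends A e" and "f \<notin> A"
  shows "fcut E ends (insert f (A - {e})) f = fcut E ends A e"
proof -
  define R where "R = (adj ends (A - {e}))\<^sup>*"
  have "insert f (A - {e}) - {f} = A - {e}"
    using \<open>f \<notin> A\<close> by auto
  then have cut_f: "fcut E ends (insert f (A - {e})) f = {g \<in> E. ends_related R ends f g}"
    unfolding fcut_eq_ends_related R_def by simp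
  have "sym R" "trans R"
    unfolding R_def by (simp_all add: sym_rtrancl sym_adj trans_rtrancl)
  moreover have "ends_related R ends e f"
    using assms(1) unfolding fcut_eq_ends_related R_def by simp
  ultimately have "ends_related R ends f g \<longleftrightarrow> ends_related R ends e g" for g
    by (meson ends_related_sym ends_related_trans)
  then have "{g \<in> E. ends_related R ends f g} = fcut E ends A e"
    unfolding fcut_eq_ends_related R_def by simp
  then show ?thesis
    using cut_f by simp
qed

lemma fcycle_exchange:
  assumes "f \<in> B"
  shows "fcycle ends (insert e (B - {f})) f = fcycle ends B e"
proof -
  have "insert f (insert e (B - {f})) = insert e B"
    using assms by auto
  then show ?thesis
    unfolding fcycle_def by simp
qed

lemma unique_T_exchange_iff_unique_S_exchange:
  "unique_T_exchange E ends A B e f \<longleftrightarrow> unique_S_exchange E ends B A e f"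
  unfolding unique_T_exchange_def unique_S_exchange_def by simp

lemma unique_S_exchange_reverse:
  assumes "A \<inter> B = {}" and "unique_S_exchange E ends A B e f"
  shows "unique_T_exchange E ends (insert e (B - {f})) (insert f (A - {e})) f e"
proof -
  have "e \<in> A" "f \<in> B" and exchange: "fcut E ends A e \<inter> fcycle ends B e = {e, f}"
    using assms(2) unfolding unique_S_exchange_def by auto
  then have "f \<notin> A" "f \<in> fcut E ends A e"
    using assms(1) by auto
  then show ?thesis
    using exchange \<open>f \<in> B\<close>
    unfolding unique_T_exchange_def fcut_exchange[OF \<open>f \<in> fcut E ends A e\<close> \<open>f \<notin> A\<close>]
      fcycle_exchange[OF \<open>f \<in> B\<close>]
    by auto
qed

definition unique_exchange :: "'e set \<Rightarrow> ('e \<Rightarrow> 'v set) \<Rightarrow> 'e set \<Rightarrow> 'e set \<Rightarrow> 'e \<times> 'e \<Rightarrow> bool" where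
  "unique_exchange E ends A B p \<longleftrightarrow>
     (case p of (e, f) \<Rightarrow> unique_S_exchange E ends A B e f \<or> unique_T_exchange E ends A B e f)"

lemma unique_exchange_commute:
  "unique_exchange E ends A B p \<longleftrightarrow> unique_exchange E ends B A p"
  unfolding unique_exchange_def unique_T_exchange_iff_unique_S_exchange by (auto split: prod.splits)

lemma unique_exchange_reverse:
  assumes disj: "A \<inter> B = {}" and "a \<in> A" "b \<in> B" and "p \<in> {(a, b), (b, a)}"
    and exchange: "unique_exchange E ends A B p"
  shows "unique_exchange E ends (insert a (B - {b})) (insert b (A - {a})) (prod.swap p)"
proof -
  consider "p = (a, b)" | "p = (b, a)"
    using \<open>p \<in> {(a, b), (b, a)}\<close> by blast
  then show ?thesis
  proof cases
    case 1
    then have "unique_S_exchange E ends A B a b"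
      using exchange \<open>a \<in> A\<close> disj unfolding unique_exchange_def unique_T_exchange_def by auto
    from unique_S_exchange_reverse[OF disj this] show ?thesis
      using 1 unfolding unique_exchange_def by simp
  next
    case 2
    then have "unique_S_exchange E ends B A b a"
      using exchange \<open>b \<in> B\<close> disj
      unfolding unique_exchange_def unique_T_exchange_iff_unique_S_exchange unique_S_exchange_def
      by auto
    from unique_S_exchange_reverse[OF _ this] disj
    have "unique_exchange E ends (insert b (A - {a})) (insert a (B - {b})) (a, b)"
      unfolding unique_exchange_def by (simp add: Int_commute)
    then show ?thesis
      using 2 by (subst unique_exchange_commute) simp
  qed
qed

definition cyclic_base :: "(nat \<Rightarrow> 'e) \<Rightarrow> (nat \<Rightarrow> 'e) \<Rightarrow> nat \<Rightarrow> nat \<Rightarrow> 'e set" where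
  "cyclic_base s t m i = s ` {i..m} \<union> t ` {1..<i}"

lemma UECBO_iff_cyclic_base:
  "UECBO V E ends S T ps \<longleftrightarrow> card S = length ps \<and> card T = length ps \<and>
     (\<exists>s t. bij_betw s {1..length ps} S \<and> bij_betw t {1..length ps} T \<and>
       (\<forall>i\<in>{1..length ps}. (ps ! (i - 1) = (s i, t i) \<or> ps ! (i - 1) = (t i, s i)) \<and>
          unique_exchange E ends (cyclic_base s t (length ps) i) (cyclic_base t s (length ps) i)
            (ps ! (i - 1))))"
  unfolding UECBO_def unique_exchange_def cyclic_base_def Let_def ..

lemma cyclic_bases_disjoint:
  assumes "inj_on s {1..m}" "inj_on t {1..m}" "s ` {1..m} \<inter> t ` {1..m} = {}" and "i \<in> {1..m}"
  shows "cyclic_base s t m i \<inter> cyclic_base t s m i = {}"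
proof -
  have sub: "{i..m} \<subseteq> {1..m}" "{1..<i} \<subseteq> {1..m}" and "{i..m} \<inter> {1..<i} = {}"
    using assms(4) by auto
  then have "s ` {i..m} \<inter> s ` {1..<i} = {}" "t ` {1..<i} \<inter> t ` {i..m} = {}"
    using inj_on_image_Int[OF assms(1) sub] inj_on_image_Int[OF assms(2) sub(2,1)]
    by (simp_all add: Int_commute)
  moreover have cross: "s ` X \<inter> t ` Y = {}" if "X \<subseteq> {1..m}" "Y \<subseteq> {1..m}" for X Y
  proof -
    have "s ` X \<inter> t ` Y \<subseteq> s ` {1..m} \<inter> t ` {1..m}"
      using that by (intro Int_mono image_mono)
    then show ?thesis
      using assms(3) by blast
  qed
  moreover have "t ` {1..<i} \<inter> s ` {1..<i} = {}"
    using cross[OF sub(2) sub(2)] by (simp add: Int_commute)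
  ultimately show ?thesis
    unfolding cyclic_base_def Int_Un_distrib Int_Un_distrib2 using sub by simp
qed

lemma cyclic_base_Suc:
  assumes "j \<in> {1..m}" "inj_on s {1..m}" "s ` {1..m} \<inter> t ` {1..m} = {}"
  shows "cyclic_base s t m (Suc j) = insert (t j) (cyclic_base s t m j - {s j})"
proof -
  have "{j..m} = insert j {Suc j..m}" "{Suc j..m} \<subseteq> {1..m}"
    using assms(1) by auto
  moreover have "s j \<notin> s ` {Suc j..m}"
    using inj_on_image_mem_iff[OF assms(2)] assms(1) by auto
  ultimately have "s ` {j..m} - {s j} = s ` {Suc j..m}"
    by auto
  moreover have "s j \<notin> t ` {1..<j}"
  proof -
    have "s j \<in> s ` {1..m}" "t ` {1..<j} \<subseteq> t ` {1..m}"
      using assms(1) by auto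
    then show ?thesis
      using assms(3) by blast
  qed
  moreover have "t ` {1..<Suc j} = insert (t j) (t ` {1..<j})"
    using assms(1) by (auto simp: atLeastLessThanSuc)
  ultimately show ?thesis
    unfolding cyclic_base_def by auto
qed

lemma image_reflect_atLeastAtMost:
  assumes "i + j = Suc m"
  shows "(\<lambda>k. Suc m - k) ` {i..m} = {1..j}"
proof
  show "{1..j} \<subseteq> (\<lambda>k. Suc m - k) ` {i..m}"
  proof
    fix x assume "x \<in> {1..j}"
    then show "x \<in> (\<lambda>k. Suc m - k) ` {i..m}"
      using assms by (intro rev_image_eqI[of "Suc m - x"]) auto
  qed
qed (use assms in auto)

lemma image_reflect_atLeastLessThan:
  assumes "i + j = Suc m"
  shows "(\<lambda>k. Suc m - k) ` {1..<i} = {Suc j..m}"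
proof
  show "{Suc j..m} \<subseteq> (\<lambda>k. Suc m - k) ` {1..<i}"
  proof
    fix x assume "x \<in> {Suc j..m}"
    then show "x \<in> (\<lambda>k. Suc m - k) ` {1..<i}"
      using assms by (intro rev_image_eqI[of "Suc m - x"]) auto
  qed
qed (use assms in auto)

lemma cyclic_base_reflect:
  assumes "i + j = Suc m"
  shows "cyclic_base (s \<circ> (\<lambda>k. Suc m - k)) (t \<circ> (\<lambda>k. Suc m - k)) m i = cyclic_base t s m (Suc j)"
  unfolding cyclic_base_def image_comp[symmetric] image_reflect_atLeastAtMost[OF assms]
    image_reflect_atLeastLessThan[OF assms]
  by (simp add: atLeastLessThanSuc_atLeastAtMost Un_commute)

lemma UECBO_rev_swap:
  assumes "S \<inter> T = {}" and "UECBO V E ends S T ps"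
  shows "UECBO V E ends S T (rev (map prod.swap ps))"
proof -
  define m where "m = length ps"
  obtain s t where card: "card S = m" "card T = m"
    and bij: "bij_betw s {1..m} S" "bij_betw t {1..m} T"
    and ordering: "\<And>j. j \<in> {1..m} \<Longrightarrow> (ps ! (j - 1) = (s j, t j) \<or> ps ! (j - 1) = (t j, s j)) \<and>
          unique_exchange E ends (cyclic_base s t m j) (cyclic_base t s m j) (ps ! (j - 1))"
    using assms(2) unfolding UECBO_iff_cyclic_base m_def by blast
  have inj: "inj_on s {1..m}" "inj_on t {1..m}"
    using bij by (simp_all add: bij_betw_imp_inj_on)
  have disj: "s ` {1..m} \<inter> t ` {1..m} = {}" "t ` {1..m} \<inter> s ` {1..m} = {}"
    using bij assms(1) by (auto simp: bij_betw_def)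
  define r where "r = (\<lambda>k::nat. Suc m - k)"
  have reflect: "bij_betw r {1..m} {1..m}"
    by (rule bij_betw_byWitness[where f' = r]) (auto simp: r_def)
  have bij': "bij_betw (s \<circ> r) {1..m} S" "bij_betw (t \<circ> r) {1..m} T"
    using bij_betw_trans[OF reflect bij(1)] bij_betw_trans[OF reflect bij(2)] .
  have reversed: "(rev (map prod.swap ps) ! (i - 1) = ((s \<circ> r) i, (t \<circ> r) i) \<or>
      rev (map prod.swap ps) ! (i - 1) = ((t \<circ> r) i, (s \<circ> r) i)) \<and>
      unique_exchange E ends (cyclic_base (s \<circ> r) (t \<circ> r) m i) (cyclic_base (t \<circ> r) (s \<circ> r) m i)
        (rev (map prod.swap ps) ! (i - 1))" if i: "i \<in> {1..m}" for i
  proof -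
    define j where "j = Suc m - i"
    have j: "j \<in> {1..m}" "i + j = Suc m"
      using i by (auto simp: j_def)
    have nth: "rev (map prod.swap ps) ! (i - 1) = prod.swap (ps ! (j - 1))"
      using i by (auto simp: rev_nth j_def m_def)
    have bases: "cyclic_base (s \<circ> r) (t \<circ> r) m i = insert (s j) (cyclic_base t s m j - {t j})"
      "cyclic_base (t \<circ> r) (s \<circ> r) m i = insert (t j) (cyclic_base s t m j - {s j})"
      unfolding r_def cyclic_base_reflect[OF j(2)]
      using cyclic_base_Suc[OF j(1) inj(2) disj(2)] cyclic_base_Suc[OF j(1) inj(1) disj(1)] by simp_all
    have "cyclic_base s t m j \<inter> cyclic_base t s m j = {}"
      using cyclic_bases_disjoint[OF inj disj(1) j(1)] .
    moreover have "s j \<in> cyclic_base s t m j" "t j \<in> cyclic_base t s m j"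
      using j by (auto simp: cyclic_base_def)
    moreover have pair: "ps ! (j - 1) \<in> {(s j, t j), (t j, s j)}"
      using ordering[OF j(1)] by simp
    moreover have "unique_exchange E ends (cyclic_base s t m j) (cyclic_base t s m j) (ps ! (j - 1))"
      using ordering[OF j(1)] ..
    ultimately have "unique_exchange E ends (cyclic_base (s \<circ> r) (t \<circ> r) m i)
        (cyclic_base (t \<circ> r) (s \<circ> r) m i) (prod.swap (ps ! (j - 1)))"
      unfolding bases by (rule unique_exchange_reverse)
    moreover have "(s \<circ> r) i = s j" "(t \<circ> r) i = t j"
      by (simp_all add: r_def j_def)
    ultimately show ?thesis
      using pair unfolding nth by auto
  qed
  show ?thesis
    unfolding UECBO_iff_cyclic_base length_rev length_map m_def[symmetric]
    using card bij' reversed by (intro conjI exI[of _ "s \<circ> r"] exI[of _ "t \<circ> r"] ballI) simp_all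
qed

theorem mainTheorem6:
  fixes V :: "'v set" and E :: "'e set" and ends :: "'e \<Rightarrow> 'v set"
    and S T :: "'e set" and ps :: "('e \<times> 'e) list"
  assumes "multigraph V E ends"
    and "bispanning V E ends"
    and "spanning_tree V E ends S" and "spanning_tree V E ends T"
    and "S \<inter> T = {}" and "S \<union> T = E"
    and "length ps = card E div 2"
    and "UECBO V E ends S T ps"
  shows "UECBO V E ends S T (rev (map prod.swap ps))"
  using UECBO_rev_swap[OF assms(5,8)] .

end
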